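(* Let $\circ$ be a binary operation on $L$ and consider: (C1) $a\circ b=a\vee b$ for all $a,b\in L^+$; (C2) $a\circ(-a)=\mathbb{O}$ for all $a\in L$; (C3) $-(a\circ b)=(-a)\circ(-b)$ for all $a,b\in L$; (C3+) $-(a\circ b)=(-a)\circ(-b)$ for all $a,b\in L^+$. Then: (0) if $\circ$ satisfies (C1) and (C2), then $\circ$ is not associative; (1) if $\circ$ satisfies (C1), (C2), (C3), then there is no such $\circ$ for which the set $A(\circ)=\{(a,b,c)\in L^3:(a\circ b)\circ c=a\circ(b\circ c)\}$ strictly contains $A(\oplus)$, where $\oplus$ is the symmetric maximum; (2) if $\circ$ satisfies (C1) and (C3+), then $\mathbb{O}$ is a neutral element of $\circ$; if moreover $\circ$ is associative then $|a\circ(-a)|\ge|a|$ for all $a\in L$; and if moreover $\circ$ is isotone then $|a\circ(-a)|=|a|$.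
   Context: Let $(L^+,\le)$ be a totally ordered set with bottom $\mathbb{O}$ and top $\mathbb{1}\neq\mathbb{O}$. Let $L^-=\{-a:a\in L^+\}$ be a disjoint copy of $L^+$ with reversed order ($-a\le-b$ iff $b\le a$), and $L=L^+\cup L^-$ with $-\mathbb{O}$ identified with $\mathbb{O}$, totally ordered so that every element of $L^-$ lies below every element of $L^+$; $-(-a)=a$; $|a|=a$ for $a\in L^+$, $|a|=-a$ otherwise. The symmetric maximum is $a\oplus b=\mathbb{O}$ if $b=-a$, and otherwise the one of $a,b$ with larger absolute value. Isotone means $a\le a'$, $b\le b'$ imply $a\circ b\le a'\circ b'$. *)

theory Defs
  imports Main
begin

text \<open>L is represented as signed elements of L+ (a type with bottom and top).
  The element -O is identified with O by excluding Neg bot from the carrier symL.\<close>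

datatype 'a sym = Pos 'a | Neg 'a

definition symL :: "('a::order_bot) sym set" where
  "symL = range Pos \<union> {Neg a | a. a \<noteq> bot}"

fun sneg :: "('a::order_bot) sym \<Rightarrow> 'a sym" where
  "sneg (Pos a) = (if a = bot then Pos bot else Neg a)"
| "sneg (Neg a) = Pos a"

fun sabs :: "'a sym \<Rightarrow> 'a" where
  "sabs (Pos a) = a"
| "sabs (Neg a) = a"

fun sle :: "('a::linorder) sym \<Rightarrow> 'a sym \<Rightarrow> bool" where
  "sle (Pos a) (Pos b) = (a \<le> b)"
| "sle (Neg a) (Neg b) = (b \<le> a)"
| "sle (Neg a) (Pos b) = True"
| "sle (Pos a) (Neg b) = False"

definition smax :: "('a::{linorder,order_bot}) sym \<Rightarrow> 'a sym \<Rightarrow> 'a sym" where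
  "smax a b = (if b = sneg a then Pos bot else if sabs b \<le> sabs a then a else b)"

definition binop_on_L :: "(('a::order_bot) sym \<Rightarrow> 'a sym \<Rightarrow> 'a sym) \<Rightarrow> bool" where
  "binop_on_L f \<longleftrightarrow> (\<forall>a\<in>symL. \<forall>b\<in>symL. f a b \<in> symL)"

definition C1 :: "(('a::linorder) sym \<Rightarrow> 'a sym \<Rightarrow> 'a sym) \<Rightarrow> bool" where
  "C1 f \<longleftrightarrow> (\<forall>a b. f (Pos a) (Pos b) = Pos (max a b))"

definition C2 :: "(('a::order_bot) sym \<Rightarrow> 'a sym \<Rightarrow> 'a sym) \<Rightarrow> bool" where
  "C2 f \<longleftrightarrow> (\<forall>a\<in>symL. f a (sneg a) = Pos bot)"

definition C3 :: "(('a::order_bot) sym \<Rightarrow> 'a sym \<Rightarrow> 'a sym) \<Rightarrow> bool" where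
  "C3 f \<longleftrightarrow> (\<forall>a\<in>symL. \<forall>b\<in>symL. sneg (f a b) = f (sneg a) (sneg b))"

definition C3plus :: "(('a::order_bot) sym \<Rightarrow> 'a sym \<Rightarrow> 'a sym) \<Rightarrow> bool" where
  "C3plus f \<longleftrightarrow> (\<forall>a b. sneg (f (Pos a) (Pos b)) = f (sneg (Pos a)) (sneg (Pos b)))"

definition assocL :: "(('a::order_bot) sym \<Rightarrow> 'a sym \<Rightarrow> 'a sym) \<Rightarrow> bool" where
  "assocL f \<longleftrightarrow> (\<forall>a\<in>symL. \<forall>b\<in>symL. \<forall>c\<in>symL. f (f a b) c = f a (f b c))"

definition Aset :: "(('a::order_bot) sym \<Rightarrow> 'a sym \<Rightarrow> 'a sym) \<Rightarrow> ('a sym \<times> 'a sym \<times> 'a sym) set" where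
  "Aset f = {(a, b, c). a \<in> symL \<and> b \<in> symL \<and> c \<in> symL \<and> f (f a b) c = f a (f b c)}"

definition neutralL :: "(('a::order_bot) sym \<Rightarrow> 'a sym \<Rightarrow> 'a sym) \<Rightarrow> 'a sym \<Rightarrow> bool" where
  "neutralL f e \<longleftrightarrow> (\<forall>a\<in>symL. f e a = a \<and> f a e = a)"

definition isotoneL :: "(('a::{linorder,order_bot}) sym \<Rightarrow> 'a sym \<Rightarrow> 'a sym) \<Rightarrow> bool" where
  "isotoneL f \<longleftrightarrow> (\<forall>a\<in>symL. \<forall>a'\<in>symL. \<forall>b\<in>symL. \<forall>b'\<in>symL.
      sle a a' \<longrightarrow> sle b b' \<longrightarrow> sle (f a b) (f a' b'))"

end

theory Submission
  imports Defs
begin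

text \<open>(0) With \<open>a \<circ> -a = 0\<close>, associativity fails on \<open>(-1 \<circ> 1) \<circ> 1 = 1 \<noteq> 0 = -1 \<circ> (1 \<circ> 1)\<close>.
  (1) If every triple on which the symmetric maximum is associative is also associative for
  \<open>\<circ>\<close>, then suitable such triples (e.g. \<open>(a, -b, b)\<close> and \<open>(a, -b, -a)\<close>) pin down \<open>a \<circ> -b\<close>
  for \<open>a \<noteq> b\<close>; with (C2) and the oddness (C3), \<open>\<circ>\<close> coincides with the symmetric maximum,
  so its associativity set cannot be larger.
  (2) Oddness on positive arguments turns (C1) into \<open>(-a) \<circ> (-b) = -(a \<or> b)\<close>, so every element
  is idempotent. Under associativity \<open>c = a \<circ> -a\<close> therefore absorbs \<open>a\<close> on the left and \<open>-a\<close>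
  on the right, which is impossible if \<open>|c| < |a|\<close>. Under isotonicity \<open>c\<close> lies between
  \<open>-|a| \<circ> -|a| = -|a|\<close> and \<open>|a| \<circ> |a| = |a|\<close>.\<close>

lemma Pos_in_symL [simp]: "Pos x \<in> symL"
  by (simp add: symL_def)

lemma Neg_in_symL [simp]: "Neg x \<in> symL \<longleftrightarrow> x \<noteq> bot"
  by (auto simp: symL_def)

lemma smax_Pos_Pos [simp]: "smax (Pos a) (Pos b) = Pos (max a b)"
  by (auto simp: smax_def max_def)

lemma smax_Neg_Neg [simp]: "smax (Neg a) (Neg b) = Neg (max a b)"
  by (auto simp: smax_def max_def)

lemma smax_Pos_Neg [simp]:
  "smax (Pos a) (Neg b) = (if a = b then Pos bot else if b \<le> a then Pos a else Neg b)"
  by (auto simp: smax_def)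

lemma smax_Neg_Pos [simp]:
  "smax (Neg a) (Pos b) = (if a = b then Pos bot else if b \<le> a then Neg a else Pos b)"
  by (auto simp: smax_def)

lemma symL_cases [consumes 1, case_names Pos Neg]:
  assumes "x \<in> symL"
  obtains a where "x = Pos a" | a where "x = Neg a" and "a \<noteq> bot"
  using assms by (cases x) auto

lemma sneg_in_symL [simp]: "sneg x \<in> symL"
  by (cases x) auto

lemma sneg_sneg: "x \<in> symL \<Longrightarrow> sneg (sneg x) = x"
  by (cases x rule: symL_cases) auto

lemma sabs_sneg [simp]: "sabs (sneg x) = sabs x"
  by (cases x) auto

lemma smax_sneg:
  fixes x y :: "'a::{linorder,order_bot} sym"
  assumes "x \<in> symL" and "y \<in> symL"
  shows "sneg (smax x y) = smax (sneg x) (sneg y)"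
  using assms
proof (cases x rule: symL_cases)
  case Pos
  with \<open>y \<in> symL\<close> show ?thesis by (cases y rule: symL_cases) (auto simp: smax_def)
next
  case Neg
  with \<open>y \<in> symL\<close> show ?thesis by (cases y rule: symL_cases) (auto simp: smax_def)
qed

lemma sle_Neg_sabs: "x \<in> symL \<Longrightarrow> sle (Neg (sabs x)) x"
  by (cases x rule: symL_cases) auto

lemma sle_Pos_sabs: "sle x (Pos (sabs x))"
  by (cases x) auto

lemma sabs_le_if_between:
  fixes c :: "'a::{linorder,order_bot} sym"
  assumes "c \<in> symL" and "sle (Neg a) c" and "sle c (Pos a)"
  shows "sabs c \<le> a"
  using assms by (cases c rule: symL_cases) auto

lemma binop_on_LD: "binop_on_L f \<Longrightarrow> x \<in> symL \<Longrightarrow> y \<in> symL \<Longrightarrow> f x y \<in> symL"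
  unfolding binop_on_L_def by blast

lemma C1D: "C1 f \<Longrightarrow> f (Pos a) (Pos b) = Pos (max a b)"
  unfolding C1_def by blast

lemma C2D: "C2 f \<Longrightarrow> x \<in> symL \<Longrightarrow> f x (sneg x) = Pos bot"
  unfolding C2_def by blast

lemma C2_Pos_Neg: "C2 f \<Longrightarrow> a \<noteq> bot \<Longrightarrow> f (Pos a) (Neg a) = Pos bot"
  using C2D[of f "Pos a"] by simp

lemma C2_Neg_Pos: "C2 f \<Longrightarrow> a \<noteq> bot \<Longrightarrow> f (Neg a) (Pos a) = Pos bot"
  using C2D[of f "Neg a"] by simp

lemma C3_imp_C3plus: "C3 f \<Longrightarrow> C3plus f"
  unfolding C3_def C3plus_def by simp

lemma C3_odd: "C3 f \<Longrightarrow> x \<in> symL \<Longrightarrow> y \<in> symL \<Longrightarrow> f x y = sneg (f (sneg x) (sneg y))"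
  unfolding C3_def by (metis sneg_in_symL sneg_sneg)

lemma assocLD:
  "assocL f \<Longrightarrow> x \<in> symL \<Longrightarrow> y \<in> symL \<Longrightarrow> z \<in> symL \<Longrightarrow> f (f x y) z = f x (f y z)"
  unfolding assocL_def by blast

lemma C1_C3plus_Neg_Neg:
  fixes f :: "'a::{linorder,order_bot} sym \<Rightarrow> 'a sym \<Rightarrow> 'a sym"
  assumes "C1 f" and "C3plus f" and "a \<noteq> bot" and "b \<noteq> bot"
  shows "f (Neg a) (Neg b) = Neg (max a b)"
proof -
  have "sneg (f (Pos a) (Pos b)) = f (sneg (Pos a)) (sneg (Pos b))"
    using \<open>C3plus f\<close> unfolding C3plus_def by blast
  then show ?thesis
    using assms by (auto simp: C1D max_def)
qed

lemma C1_C3plus_idem: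
  fixes f :: "'a::{linorder,order_bot} sym \<Rightarrow> 'a sym \<Rightarrow> 'a sym"
  assumes "C1 f" and "C3plus f" and "x \<in> symL"
  shows "f x x = x"
  using assms(3) by (cases x rule: symL_cases) (simp_all add: assms C1D C1_C3plus_Neg_Neg)

lemma C1_C3plus_neutral:
  fixes f :: "'a::{linorder,order_bot} sym \<Rightarrow> 'a sym \<Rightarrow> 'a sym"
  assumes "C1 f" and "C3plus f"
  shows "neutralL f (Pos bot)"
  unfolding neutralL_def
proof
  fix x :: "'a sym"
  assume "x \<in> symL"
  then show "f (Pos bot) x = x \<and> f x (Pos bot) = x"
  proof (cases rule: symL_cases)
    case (Pos a)
    then show ?thesis using \<open>C1 f\<close> by (simp add: C1D)
  next
    case (Neg a)
    have "sneg (f (Pos bot) (Pos a)) = f (sneg (Pos bot)) (sneg (Pos a))"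
      and "sneg (f (Pos a) (Pos bot)) = f (sneg (Pos a)) (sneg (Pos bot))"
      using \<open>C3plus f\<close> unfolding C3plus_def by blast+
    then show ?thesis using Neg \<open>C1 f\<close> by (simp add: C1D)
  qed
qed

lemma C1_C3plus_absorbing_sabs_ge:
  fixes f :: "'a::{linorder,order_bot} sym \<Rightarrow> 'a sym \<Rightarrow> 'a sym"
  assumes "C1 f" and "C3plus f" and "c \<in> symL" and "a \<noteq> bot"
    and absorbs_Pos: "f (Pos a) c = c \<or> f c (Pos a) = c"
    and absorbs_Neg: "f (Neg a) c = c \<or> f c (Neg a) = c"
  shows "a \<le> sabs c"
  using \<open>c \<in> symL\<close>
proof (cases rule: symL_cases)
  case (Pos y)
  then show ?thesis
    using absorbs_Pos \<open>C1 f\<close> by (auto simp: C1D max_def split: if_splits)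
next
  case (Neg y)
  then show ?thesis
    using absorbs_Neg assms(1,2,4) by (auto simp: C1_C3plus_Neg_Neg max_def split: if_splits)
qed

lemma C1_C3plus_assoc_sabs_ge:
  fixes f :: "'a::{linorder,order_bot} sym \<Rightarrow> 'a sym \<Rightarrow> 'a sym"
  assumes "C1 f" and "C3plus f" and "binop_on_L f" and "assocL f" and "x \<in> symL"
  shows "sabs x \<le> sabs (f x (sneg x))"
proof (cases "sabs x = bot")
  case True
  then show ?thesis by simp
next
  case False
  define c where "c = f x (sneg x)"
  have c: "c \<in> symL"
    unfolding c_def using assms(3,5) by (simp add: binop_on_LD)
  have absorbs_x: "f x c = c"
    unfolding c_def using assms
    by (metis assocLD C1_C3plus_idem sneg_in_symL)
  have absorbs_sneg_x: "f c (sneg x) = c"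
    unfolding c_def using assms
    by (metis assocLD C1_C3plus_idem sneg_in_symL)
  from \<open>x \<in> symL\<close> show ?thesis
  proof (cases rule: symL_cases)
    case (Pos a)
    then show ?thesis
      using C1_C3plus_absorbing_sabs_ge[OF assms(1,2) c, of a] absorbs_x absorbs_sneg_x False
      by (simp add: c_def)
  next
    case (Neg a)
    then show ?thesis
      using C1_C3plus_absorbing_sabs_ge[OF assms(1,2) c, of a] absorbs_x absorbs_sneg_x
      by (simp add: c_def)
  qed
qed

lemma C1_C3plus_isotone_sabs_le:
  fixes f :: "'a::{linorder,order_bot} sym \<Rightarrow> 'a sym \<Rightarrow> 'a sym"
  assumes "C1 f" and "C3plus f" and "binop_on_L f" and "isotoneL f" and "x \<in> symL"
  shows "sabs (f x (sneg x)) \<le> sabs x"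
proof (cases "sabs x = bot")
  case True
  with \<open>x \<in> symL\<close> have "x = Pos bot"
    by (cases rule: symL_cases) auto
  then show ?thesis using \<open>C1 f\<close> by (simp add: C1D)
next
  case False
  let ?a = "sabs x"
  have mono: "sle (f u v) (f u' v')"
    if "u \<in> symL" "u' \<in> symL" "v \<in> symL" "v' \<in> symL" "sle u u'" "sle v v'" for u u' v v'
    using \<open>isotoneL f\<close> that unfolding isotoneL_def by blast
  have "sle (f (Neg ?a) (Neg ?a)) (f x (sneg x))"
    using mono[of "Neg ?a" x "Neg ?a" "sneg x"] False \<open>x \<in> symL\<close>
    by (metis sle_Neg_sabs sabs_sneg sneg_in_symL Neg_in_symL)
  then have lower: "sle (Neg ?a) (f x (sneg x))"
    using C1_C3plus_idem[OF assms(1,2), of "Neg ?a"] False by simp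
  have "sle (f x (sneg x)) (f (Pos ?a) (Pos ?a))"
    using mono[of x "Pos ?a" "sneg x" "Pos ?a"] \<open>x \<in> symL\<close>
    by (metis sle_Pos_sabs sabs_sneg sneg_in_symL Pos_in_symL)
  then have upper: "sle (f x (sneg x)) (Pos ?a)"
    using \<open>C1 f\<close> by (simp add: C1D)
  show ?thesis
    using sabs_le_if_between[OF _ lower upper] assms(3,5) by (simp add: binop_on_LD)
qed

lemma C1_C2_not_assoc:
  fixes f :: "'a::{linorder,order_bot,order_top} sym \<Rightarrow> 'a sym \<Rightarrow> 'a sym"
  assumes "(bot::'a) \<noteq> top" and "C1 f" and "C2 f"
  shows "\<not> assocL f"
proof
  assume "assocL f"
  then have "f (f (Neg top) (Pos top)) (Pos top) = f (Neg top) (f (Pos top) (Pos top))"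
    using assms(1) by (simp add: assocLD)
  then have "Pos bot = Pos (top::'a)"
    using assms by (simp add: C1D C2_Neg_Pos)
  then show False
    using assms(1) by simp
qed

lemma assoc_if_smax_assoc:
  assumes "Aset smax \<subseteq> Aset f" and "x \<in> symL" and "y \<in> symL" and "z \<in> symL"
    and "smax (smax x y) z = smax x (smax y z)"
  shows "f (f x y) z = f x (f y z)"
  using assms unfolding Aset_def by blast

lemma Pos_Neg_eq_Pos_if_less:
  fixes f :: "'a::{linorder,order_bot} sym \<Rightarrow> 'a sym \<Rightarrow> 'a sym"
  assumes "C1 f" and "C2 f" and "C3plus f" and "binop_on_L f" and "Aset smax \<subseteq> Aset f"
    and "b < a" and "b \<noteq> bot"
  shows "f (Pos a) (Neg b) = Pos a"
proof -
  have "a \<noteq> bot" "\<not> a \<le> b"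
    using assms(6) by auto
  define c where "c = f (Pos a) (Neg b)"
  have c: "c \<in> symL"
    unfolding c_def using assms(4,7) by (simp add: binop_on_LD)
  have "f c (Pos b) = f (Pos a) (f (Neg b) (Pos b))"
    unfolding c_def using assms(6,7)
    by (intro assoc_if_smax_assoc[OF assms(5)]) (auto simp: max_def bot.extremum_unique)
  then have c_Pos_b: "f c (Pos b) = Pos a"
    using assms(1,2,7) by (simp add: C1D C2_Neg_Pos)
  have "f c (Neg a) = f (Pos a) (f (Neg b) (Neg a))"
    unfolding c_def using assms(6,7)
    by (intro assoc_if_smax_assoc[OF assms(5)]) (auto simp: max_def bot.extremum_unique)
  then have c_Neg_a: "f c (Neg a) = Pos bot"
    using assms(1-3,6,7) \<open>a \<noteq> bot\<close> by (simp add: C1_C3plus_Neg_Neg C2_Pos_Neg max_absorb2 less_imp_le)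
  from c show ?thesis
  proof (cases rule: symL_cases)
    case (Pos y)
    then show ?thesis
      using c_Pos_b assms(1,6) by (auto simp: c_def C1D max_def split: if_splits)
  next
    case (Neg y)
    then show ?thesis
      using c_Neg_a assms(1,3) \<open>a \<noteq> bot\<close> by (simp add: C1_C3plus_Neg_Neg)
  qed
qed

lemma Pos_Neg_eq_Neg_if_greater:
  fixes f :: "'a::{linorder,order_bot} sym \<Rightarrow> 'a sym \<Rightarrow> 'a sym"
  assumes "C1 f" and "C2 f" and "C3plus f" and "binop_on_L f" and "Aset smax \<subseteq> Aset f"
    and "a < b"
  shows "f (Pos a) (Neg b) = Neg b"
proof (cases "a = bot")
  case True
  then show ?thesis
    using C1_C3plus_neutral[OF assms(1,3)] assms(6) unfolding neutralL_def by auto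
next
  case False
  have "b \<noteq> bot" "\<not> b \<le> a"
    using assms(6) by auto
  define c where "c = f (Pos a) (Neg b)"
  have c: "c \<in> symL"
    unfolding c_def using assms(4) \<open>b \<noteq> bot\<close> by (simp add: binop_on_LD)
  have "f (Neg a) c = f (f (Neg a) (Pos a)) (Neg b)"
    unfolding c_def using assms(6) False
    by (intro assoc_if_smax_assoc[OF assms(5), symmetric]) (auto simp: max_def bot.extremum_unique)
  then have Neg_a_c: "f (Neg a) c = Neg b"
    using C1_C3plus_neutral[OF assms(1,3)] assms(2) False \<open>b \<noteq> bot\<close>
    unfolding neutralL_def by (simp add: C2_Neg_Pos)
  have "f (Pos b) c = f (f (Pos b) (Pos a)) (Neg b)"
    unfolding c_def using assms(6) False
    by (intro assoc_if_smax_assoc[OF assms(5), symmetric]) (auto simp: max_def bot.extremum_unique)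
  then have Pos_b_c: "f (Pos b) c = Pos bot"
    using assms(1,2,6) \<open>b \<noteq> bot\<close> by (simp add: C1D C2_Pos_Neg max_absorb1 less_imp_le)
  from c show ?thesis
  proof (cases rule: symL_cases)
    case (Pos y)
    then show ?thesis
      using Pos_b_c assms(1) \<open>b \<noteq> bot\<close>
      by (auto simp: C1D max_def bot.extremum_unique split: if_splits)
  next
    case (Neg y)
    then show ?thesis
      using Neg_a_c assms(1,3,6) False by (auto simp: C1_C3plus_Neg_Neg max_def c_def split: if_splits)
  qed
qed

lemma eq_smax_if_Aset_smax_subset:
  fixes f :: "'a::{linorder,order_bot} sym \<Rightarrow> 'a sym \<Rightarrow> 'a sym"
  assumes "C1 f" and "C2 f" and "C3 f" and "binop_on_L f" and "Aset smax \<subseteq> Aset f"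
    and "x \<in> symL" and "y \<in> symL"
  shows "f x y = smax x y"
proof -
  have C3plus: "C3plus f"
    using assms(3) by (rule C3_imp_C3plus)
  have Pos_case: "f (Pos a) v = smax (Pos a) v" if "v \<in> symL" for a v
    using that
  proof (cases rule: symL_cases)
    case Pos
    then show ?thesis using assms(1) by (simp add: C1D)
  next
    case (Neg b)
    consider "a = b" | "b < a" | "a < b"
      by fastforce
    then show ?thesis
      using Neg assms(1,2,4,5) C3plus
      by cases (auto simp: C2_Pos_Neg Pos_Neg_eq_Pos_if_less Pos_Neg_eq_Neg_if_greater)
  qed
  from \<open>x \<in> symL\<close> show ?thesis
  proof (cases rule: symL_cases)
    case Pos
    then show ?thesis using Pos_case assms(7) by simp
  next
    case (Neg a)
    \<comment> \<open>oddness of both operations reduces a negative left argument to a positive one\<close>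
    have "f x y = sneg (f (Pos a) (sneg y))"
      using C3_odd[OF assms(3,6,7)] Neg by simp
    also have "\<dots> = sneg (smax (sneg x) (sneg y))"
      using Pos_case Neg by simp
    also have "\<dots> = smax x y"
      using assms(6,7) by (simp add: smax_sneg sneg_sneg)
    finally show ?thesis .
  qed
qed

lemma Aset_cong:
  assumes "binop_on_L f" and "\<And>x y. x \<in> symL \<Longrightarrow> y \<in> symL \<Longrightarrow> f x y = g x y"
  shows "Aset f = Aset g"
proof -
  have "f (f x y) z = g (g x y) z" and "f x (f y z) = g x (g y z)"
    if "x \<in> symL" "y \<in> symL" "z \<in> symL" for x y z
    using assms that by (metis binop_on_LD)+
  then show ?thesis
    unfolding Aset_def by auto
qed

lemma C1_C2_C3_not_Aset_smax_psubset:
  fixes f :: "'a::{linorder,order_bot} sym \<Rightarrow> 'a sym \<Rightarrow> 'a sym"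
  assumes "C1 f" and "C2 f" and "C3 f" and "binop_on_L f"
  shows "\<not> Aset smax \<subset> Aset f"
proof
  assume psub: "Aset smax \<subset> Aset f"
  then have "Aset f = Aset smax"
    using assms by (intro Aset_cong eq_smax_if_Aset_smax_subset) auto
  with psub show False
    by simp
qed

theorem proposition2:
  fixes f :: "('a::{linorder,order_bot,order_top}) sym \<Rightarrow> 'a sym \<Rightarrow> 'a sym"
  assumes nontriv: "(bot::'a) \<noteq> top"
    and binop: "binop_on_L f"
  shows "(C1 f \<and> C2 f \<longrightarrow> \<not> assocL f)
    \<and> (C1 f \<and> C2 f \<and> C3 f \<longrightarrow> \<not> (Aset smax \<subset> Aset f))
    \<and> (C1 f \<and> C3plus f \<longrightarrow>
         neutralL f (Pos bot)
         \<and> (assocL f \<longrightarrow> (\<forall>a\<in>symL. sabs a \<le> sabs (f a (sneg a))))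
         \<and> (assocL f \<and> isotoneL f \<longrightarrow> (\<forall>a\<in>symL. sabs (f a (sneg a)) = sabs a)))"
proof (intro conjI impI)
  show "\<not> assocL f" if "C1 f \<and> C2 f"
    using that C1_C2_not_assoc[OF nontriv] by blast
  show "\<not> Aset smax \<subset> Aset f" if "C1 f \<and> C2 f \<and> C3 f"
    using that C1_C2_C3_not_Aset_smax_psubset[OF _ _ _ binop] by blast
  assume C1_C3plus: "C1 f \<and> C3plus f"
  then show "neutralL f (Pos bot)"
    by (blast intro: C1_C3plus_neutral)
  show "\<forall>a\<in>symL. sabs a \<le> sabs (f a (sneg a))" if "assocL f"
    using C1_C3plus that C1_C3plus_assoc_sabs_ge[OF _ _ binop] by blast
  show "\<forall>a\<in>symL. sabs (f a (sneg a)) = sabs a" if "assocL f \<and> isotoneL f"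
    using C1_C3plus that C1_C3plus_assoc_sabs_ge[OF _ _ binop]
      C1_C3plus_isotone_sabs_le[OF _ _ binop] by (blast intro: order_antisym)
qed

end
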